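(* In the production planning setting described in the context (general case), fix $\pmb{x}\in\mathbb{X}$ and let $G$, the arc lengths $c_{uw}$, arc weights $\delta_{uw}$ and the restricted longest path problem (RLP) be as defined in the context. Then for every real $C^*$: a cumulative demand scenario with cost $C^*$ is optimal for the adversarial problem $\max_{\pmb{D}\in\mathcal{U}^d}\sum_{t\in[T]}\max\{f_I(X_t,D_t),f_B(X_t,D_t)\}$ if and only if there is an optimal $\mathfrak{s}$-$\mathfrak{t}$ path of length $C^*$ for the RLP instance.
   Context: There are $T\ge 1$ periods, $[T]=\{1,\dots,T\}$. Given are a production cost $c^P$, an inventory cost $c^I$, a backordering cost $c^B$ and a selling price $b^P$, and a set $\mathbb{X}\subseteq\mathbb{R}^T_+$ of feasible production plans described by finitely many linear constraints; for a plan $X_t=\sum_{i\in[t]}x_i$. For $t\in[T-1]$ let $f_I(X_t,D_t)=c^I(X_t-D_t)$, $f_B(X_t,D_t)=c^B(D_t-X_t)$; for $t=T$ let $f_I(X_T,D_T)=c^I(X_T-D_T)+c^PX_T-b^PD_T$, $f_B(X_T,D_T)=c^B(D_T-X_T)+c^PX_T-b^PX_T$. Nominal cumulative demands $\widehat{D}_t\ge0$ are nondecreasing in $t$, deviations $0\le\Delta_t\le\widehat{D}_t$. $\mathcal{U}^d=\{\pmb{D}: D_t\le D_{t+1}\ (t\in[T-1]),\ D_t\in[\widehat{D}_t-\Delta_t,\widehat{D}_t+\Delta_t],\ |\{t:D_t\ne\widehat{D}_t\}|\le\Gamma^d\}$, $\Gamma^d\in\{0,\dots,T\}$ (intervals may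 overlap). For $k\in[T]$ let $\mathcal{D}_k=[\widehat{D}_k-\Delta_k,\widehat{D}_k+\Delta_k]\cap\bigcup_{t\in[T]}\{\widehat{D}_t-\Delta_t,\widehat{D}_t,\widehat{D}_t+\Delta_t\}$. The directed layered graph $G$ has layers $V_0=\{\mathfrak{s}\}$, $V_1,\dots,V_T$, $V_{T+1}=\{\mathfrak{t}\}$, where $V_k$ ($k\in[T]$) contains exactly one node $u$ for each value $D_u\in\mathcal{D}_k$. Arcs: $(\mathfrak{s},w)$ for every $w\in V_1$; $(u,w)$ for $u\in V_{k-1}$, $w\in V_k$ ($k=2,\dots,T$) whenever $D_u\le D_w$; $(u,\mathfrak{t})$ for every $u\in V_T$. An arc $(u,w)$ with $w\in V_k$, $k\in[T]$, has length $c_{uw}=\max\{f_I(X_k,D_w),f_B(X_k,D_w)\}$ and weight $\delta_{uw}=1$ if $D_w\ne\widehat{D}_k$ and $\delta_{uw}=0$ if $D_w=\widehat{D}_k$; arcs into $\mathfrak{t}$ have length $0$ and weight $0$. The RLP instance asks for an $\mathfrak{s}$-$\mathfrak{t}$ path $p$ with $\sum_{(u,w)\in p}\delta_{uw}\le\Gamma^d$ maximizing $\sum_{(u,w)\in p}c_{uw}$. The cost of a scenario $\pmb{D}$ is $\sum_{t\in[T]}\max\{f_I(X_t,D_t),f_B(X_t,D_t)\}$. *)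

theory Defs
  imports Main Complex_Main
begin

(* Periods are 1..T.  Plans, demands etc. are functions nat => real; only the
   values at 1..T matter. *)

definition cumX :: "(nat \<Rightarrow> real) \<Rightarrow> nat \<Rightarrow> real" where
  "cumX x t = (\<Sum>i\<in>{1..t}. x i)"

definition plans :: "nat \<Rightarrow> nat \<Rightarrow> (nat \<Rightarrow> nat \<Rightarrow> real) \<Rightarrow> (nat \<Rightarrow> real) \<Rightarrow> (nat \<Rightarrow> real) set" where
  "plans T m A b = {x. (\<forall>i\<in>{1..T}. 0 \<le> x i) \<and>
                        (\<forall>j<m. (\<Sum>i\<in>{1..T}. A j i * x i) \<le> b j)}"

definition fI :: "nat \<Rightarrow> real \<Rightarrow> real \<Rightarrow> real \<Rightarrow> real \<Rightarrow> nat \<Rightarrow> real \<Rightarrow> real \<Rightarrow> real" where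
  "fI T cP cI cB bP t Xt Dt =
     (if t = T then cI * (Xt - Dt) + cP * Xt - bP * Dt else cI * (Xt - Dt))"

definition fB :: "nat \<Rightarrow> real \<Rightarrow> real \<Rightarrow> real \<Rightarrow> real \<Rightarrow> nat \<Rightarrow> real \<Rightarrow> real \<Rightarrow> real" where
  "fB T cP cI cB bP t Xt Dt =
     (if t = T then cB * (Dt - Xt) + cP * Xt - bP * Xt else cB * (Dt - Xt))"

definition pcost :: "nat \<Rightarrow> real \<Rightarrow> real \<Rightarrow> real \<Rightarrow> real \<Rightarrow> (nat \<Rightarrow> real) \<Rightarrow> nat \<Rightarrow> real \<Rightarrow> real" where
  "pcost T cP cI cB bP x k v =
     max (fI T cP cI cB bP k (cumX x k) v) (fB T cP cI cB bP k (cumX x k) v)"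

definition scen_cost :: "nat \<Rightarrow> real \<Rightarrow> real \<Rightarrow> real \<Rightarrow> real \<Rightarrow> (nat \<Rightarrow> real) \<Rightarrow> (nat \<Rightarrow> real) \<Rightarrow> real" where
  "scen_cost T cP cI cB bP x D = (\<Sum>t\<in>{1..T}. pcost T cP cI cB bP x t (D t))"

definition Ud :: "nat \<Rightarrow> (nat \<Rightarrow> real) \<Rightarrow> (nat \<Rightarrow> real) \<Rightarrow> nat \<Rightarrow> (nat \<Rightarrow> real) set" where
  "Ud T Dh Dl \<Gamma> = {D. (\<forall>t\<in>{1..<T}. D t \<le> D (t+1)) \<and>
                     (\<forall>t\<in>{1..T}. Dh t - Dl t \<le> D t \<and> D t \<le> Dh t + Dl t) \<and>
                     card {t\<in>{1..T}. D t \<noteq> Dh t} \<le> \<Gamma>}"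

definition Dset :: "nat \<Rightarrow> (nat \<Rightarrow> real) \<Rightarrow> (nat \<Rightarrow> real) \<Rightarrow> nat \<Rightarrow> real set" where
  "Dset T Dh Dl k = {Dh k - Dl k .. Dh k + Dl k} \<inter>
      (\<Union>t\<in>{1..T}. {Dh t - Dl t, Dh t, Dh t + Dl t})"

datatype gnode = Src | Lay nat real | Snk

definition gnodes :: "nat \<Rightarrow> (nat \<Rightarrow> real) \<Rightarrow> (nat \<Rightarrow> real) \<Rightarrow> gnode set" where
  "gnodes T Dh Dl = {Src, Snk} \<union> {Lay k v | k v. k \<in> {1..T} \<and> v \<in> Dset T Dh Dl k}"

definition garcs :: "nat \<Rightarrow> (nat \<Rightarrow> real) \<Rightarrow> (nat \<Rightarrow> real) \<Rightarrow> (gnode \<times> gnode) set" where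
  "garcs T Dh Dl =
     {(Src, Lay 1 v) | v. v \<in> Dset T Dh Dl 1}
   \<union> {(Lay (k - 1) u, Lay k w) | k u w. k \<in> {2..T} \<and> u \<in> Dset T Dh Dl (k - 1)
                                    \<and> w \<in> Dset T Dh Dl k \<and> u \<le> w}
   \<union> {(Lay T u, Snk) | u. u \<in> Dset T Dh Dl T}"

fun arc_len :: "nat \<Rightarrow> real \<Rightarrow> real \<Rightarrow> real \<Rightarrow> real \<Rightarrow> (nat \<Rightarrow> real) \<Rightarrow> gnode \<times> gnode \<Rightarrow> real" where
  "arc_len T cP cI cB bP x (u, Lay k w) = pcost T cP cI cB bP x k w"
| "arc_len T cP cI cB bP x (u, _) = 0"

fun arc_wt :: "(nat \<Rightarrow> real) \<Rightarrow> gnode \<times> gnode \<Rightarrow> nat" where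
  "arc_wt Dh (u, Lay k w) = (if w \<noteq> Dh k then 1 else 0)"
| "arc_wt Dh (u, _) = 0"

definition path_arcs :: "'a list \<Rightarrow> ('a \<times> 'a) list" where
  "path_arcs p = zip p (tl p)"

definition st_path :: "nat \<Rightarrow> (nat \<Rightarrow> real) \<Rightarrow> (nat \<Rightarrow> real) \<Rightarrow> gnode list \<Rightarrow> bool" where
  "st_path T Dh Dl p \<longleftrightarrow> p \<noteq> [] \<and> hd p = Src \<and> last p = Snk \<and>
      set p \<subseteq> gnodes T Dh Dl \<and> set (path_arcs p) \<subseteq> garcs T Dh Dl"

definition rlp_feasible :: "nat \<Rightarrow> (nat \<Rightarrow> real) \<Rightarrow> (nat \<Rightarrow> real) \<Rightarrow> nat \<Rightarrow> gnode list \<Rightarrow> bool" where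
  "rlp_feasible T Dh Dl \<Gamma> p \<longleftrightarrow> st_path T Dh Dl p \<and>
      sum_list (map (arc_wt Dh) (path_arcs p)) \<le> \<Gamma>"

definition path_len :: "nat \<Rightarrow> real \<Rightarrow> real \<Rightarrow> real \<Rightarrow> real \<Rightarrow> (nat \<Rightarrow> real) \<Rightarrow> gnode list \<Rightarrow> real" where
  "path_len T cP cI cB bP x p = sum_list (map (arc_len T cP cI cB bP x) (path_arcs p))"

end

theory Submission
  imports Defs "HOL-Analysis.Convex"
begin

(* An s-t path of G visits exactly one node per layer, so the feasible RLP paths are exactly the
   scenarios of U^d all of whose values are breakpoints, i.e. lie in the finite set of the
   numbers Dh t - Dl t, Dh t, Dh t + Dl t; the length of such a path is the cost of its scenario
   and its weight is the number of deviating periods.  Every scenario is dominated by such a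
   breakpoint scenario: the per-period cost max{f_I, f_B} is convex in the demand, and moving all
   periods that share a non-breakpoint value v to a common new value y keeps the scenario in U^d
   for y in an interval around v whose endpoints are breakpoints or other values of the scenario.
   One endpoint does not decrease the cost and removes v, so induction on the number of
   non-breakpoint values concludes. *)

lemma convex_on_affine_real: "convex S \<Longrightarrow> convex_on S (\<lambda>v::real. a + c * v)"
  unfolding convex_on_def
proof (intro conjI ballI allI impI; simp?)
  fix x y u w :: real
  assume "u + w = 1"
  then have "a = u * a + w * a" by (metis distrib_right mult_1)
  then show "a + c * (u * x + w * y) \<le> u * (a + c * x) + w * (a + c * y)"
    by (simp add: algebra_simps)
qed

lemma convex_on_max:
  assumes "convex_on S f" "convex_on S g"
  shows "convex_on S (\<lambda>x. max (f x) (g x))"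
  unfolding convex_on_def
proof (intro conjI ballI allI impI)
  show "convex S" using assms(1) by (rule convex_on_imp_convex)
  fix x y u v
  assume xy: "x \<in> S" "y \<in> S" and uv: "0 \<le> u" "0 \<le> (v::real)" "u + v = 1"
  let ?m = "u * max (f x) (g x) + v * max (f y) (g y)"
  have "f (u *\<^sub>R x + v *\<^sub>R y) \<le> ?m"
    using convex_onD[OF assms(1), of v x y] xy uv
      mult_left_mono[OF max.cobounded1, of u] mult_left_mono[OF max.cobounded1, of v]
    by (smt (verit))
  moreover have "g (u *\<^sub>R x + v *\<^sub>R y) \<le> ?m"
    using convex_onD[OF assms(2), of v x y] xy uv
      mult_left_mono[OF max.cobounded2, of u] mult_left_mono[OF max.cobounded2, of v]
    by (smt (verit))
  ultimately show "max (f (u *\<^sub>R x + v *\<^sub>R y)) (g (u *\<^sub>R x + v *\<^sub>R y)) \<le> ?m"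
    by simp
qed

lemma convex_on_sum_fun:
  assumes "finite I" "convex S" "\<And>i. i \<in> I \<Longrightarrow> convex_on S (f i)"
  shows "convex_on S (\<lambda>x. \<Sum>i\<in>I. f i x)"
  using assms by (induction I rule: finite_induct) (auto simp: convex_on_const)

lemma attained_max_iff:
  assumes "\<forall>q\<in>Q. \<exists>p\<in>P. f p = g q" and "\<forall>p\<in>P. \<exists>q\<in>Q. f p \<le> g q"
  shows "(\<exists>p\<in>P. f p = C \<and> (\<forall>p'\<in>P. f p' \<le> (C::'c::order))) \<longleftrightarrow>
         (\<exists>q\<in>Q. g q = C \<and> (\<forall>q'\<in>Q. g q' \<le> C))"
proof
  assume "\<exists>p\<in>P. f p = C \<and> (\<forall>p'\<in>P. f p' \<le> C)"
  then obtain p where p: "p \<in> P" "f p = C" and max: "\<forall>p'\<in>P. f p' \<le> C" by blast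
  obtain q where "q \<in> Q" "C \<le> g q" using assms(2) p by blast
  moreover have "\<forall>q'\<in>Q. g q' \<le> C" using assms(1) max by fastforce
  ultimately show "\<exists>q\<in>Q. g q = C \<and> (\<forall>q'\<in>Q. g q' \<le> C)" by (blast intro: antisym)
next
  assume "\<exists>q\<in>Q. g q = C \<and> (\<forall>q'\<in>Q. g q' \<le> C)"
  then obtain q where q: "q \<in> Q" "g q = C" and max: "\<forall>q'\<in>Q. g q' \<le> C" by blast
  obtain p where "p \<in> P" "f p = C" using assms(1) q by blast
  moreover have "\<forall>p'\<in>P. f p' \<le> C" using assms(2) max by (meson order_trans)
  ultimately show "\<exists>p\<in>P. f p = C \<and> (\<forall>p'\<in>P. f p' \<le> C)" by blast
qed

definition breakpoints :: "nat \<Rightarrow> (nat \<Rightarrow> real) \<Rightarrow> (nat \<Rightarrow> real) \<Rightarrow> real set" where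
  "breakpoints T Dh Dl = (\<Union>t\<in>{1..T}. {Dh t - Dl t, Dh t, Dh t + Dl t})"

lemma Dset_eq_breakpoints: "Dset T Dh Dl k = {Dh k - Dl k .. Dh k + Dl k} \<inter> breakpoints T Dh Dl"
  by (simp add: Dset_def breakpoints_def)

definition scen_node :: "nat \<Rightarrow> (nat \<Rightarrow> real) \<Rightarrow> nat \<Rightarrow> gnode" where
  "scen_node T D i = (if i = 0 then Src else if i \<le> T then Lay i (D i) else Snk)"

definition scen_path :: "nat \<Rightarrow> (nat \<Rightarrow> real) \<Rightarrow> gnode list" where
  "scen_path T D = map (scen_node T D) [0..<T+2]"

lemma path_arcs_Cons_Cons: "path_arcs (a # b # r) = (a, b) # path_arcs (b # r)"
  by (simp add: path_arcs_def)

lemma path_arcs_map_upt: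
  "path_arcs (map f [m..<Suc n]) = map (\<lambda>i. (f i, f (Suc i))) [m..<n]"
  unfolding path_arcs_def by (rule nth_equalityI) (auto simp: nth_tl simp del: upt_Suc)

lemma path_arcs_scen_path:
  "path_arcs (scen_path T D) = map (\<lambda>i. (scen_node T D i, scen_node T D (Suc i))) [0..<Suc T]"
  by (simp add: scen_path_def path_arcs_map_upt del: upt_Suc)

lemma sum_list_arcs_scen_path:
  fixes h :: "gnode \<times> gnode \<Rightarrow> 'a::comm_monoid_add"
  assumes "\<And>u. h (u, Snk) = 0" and "\<And>u k w. h (u, Lay k w) = g k w"
  shows "sum_list (map h (path_arcs (scen_path T D))) = (\<Sum>t\<in>{1..T}. g t (D t))"
proof -
  have "sum_list (map h (path_arcs (scen_path T D)))
      = (\<Sum>i<Suc T. h (scen_node T D i, scen_node T D (Suc i)))"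
    unfolding path_arcs_scen_path
    by (simp add: sum_set_upt_conv_sum_list_nat[symmetric] o_def atLeast0LessThan del: upt_Suc)
  also have "\<dots> = (\<Sum>i<T. g (Suc i) (D (Suc i)))"
    by (simp add: assms scen_node_def)
  also have "\<dots> = (\<Sum>t\<in>{1..T}. g t (D t))"
    by (simp add: sum.atLeast1_atMost_eq)
  finally show ?thesis .
qed

lemma path_len_scen_path:
  "path_len T cP cI cB bP x (scen_path T D) = scen_cost T cP cI cB bP x D"
  unfolding path_len_def scen_cost_def by (rule sum_list_arcs_scen_path) simp_all

lemma path_weight_scen_path:
  "sum_list (map (arc_wt Dh) (path_arcs (scen_path T D))) = card {t\<in>{1..T}. D t \<noteq> Dh t}"
proof -
  have "sum_list (map (arc_wt Dh) (path_arcs (scen_path T D)))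
      = (\<Sum>t\<in>{1..T}. if D t \<noteq> Dh t then 1 else 0)"
    by (rule sum_list_arcs_scen_path) simp_all
  also have "\<dots> = card {t\<in>{1..T}. D t \<noteq> Dh t}"
    by (simp add: sum.If_cases Int_def conj_commute)
  finally show ?thesis .
qed

lemma Lay_Suc_in_garcs:
  assumes "1 \<le> k" "k < T" "u \<in> Dset T Dh Dl k" "w \<in> Dset T Dh Dl (Suc k)" "u \<le> w"
  shows "(Lay k u, Lay (Suc k) w) \<in> garcs T Dh Dl"
proof -
  have "Suc k \<in> {2..T}" "u \<in> Dset T Dh Dl (Suc k - 1)" using assms by auto
  then have "(Lay (Suc k - 1) u, Lay (Suc k) w) \<in> garcs T Dh Dl"
    unfolding garcs_def using assms(4,5) by blast
  then show ?thesis by simp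
qed

lemma st_path_scen_path:
  assumes "1 \<le> T" "\<forall>t\<in>{1..T}. D t \<in> Dset T Dh Dl t" "\<forall>t\<in>{1..<T}. D t \<le> D (Suc t)"
  shows "st_path T Dh Dl (scen_path T D)"
proof -
  have "(scen_node T D i, scen_node T D (Suc i)) \<in> garcs T Dh Dl" if "i \<le> T" for i
  proof -
    consider "i = 0" | "0 < i" "i < T" | "i = T" "0 < i"
      using \<open>i \<le> T\<close> by linarith
    then show ?thesis
    proof cases
      case 2
      then show ?thesis using assms(2,3) by (simp add: scen_node_def Lay_Suc_in_garcs)
    qed (use assms in \<open>auto simp: scen_node_def garcs_def\<close>)
  qed
  then have "set (path_arcs (scen_path T D)) \<subseteq> garcs T Dh Dl"
    unfolding path_arcs_scen_path by (auto simp del: upt_Suc)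
  moreover have "set (scen_path T D) \<subseteq> gnodes T Dh Dl"
    using assms(2) by (auto simp: scen_path_def scen_node_def gnodes_def)
  ultimately show ?thesis
    by (simp add: st_path_def scen_path_def scen_node_def hd_map last_map del: upt_Suc)
qed

lemma garcs_suffix_is_scen_path:
  assumes "set (path_arcs q) \<subseteq> garcs T Dh Dl" "q \<noteq> []" "last q = Snk"
    and "hd q = Lay k u" "1 \<le> k"
  shows "\<exists>D. q = map (scen_node T D) [k..<T+2] \<and> D k = u \<and>
           (\<forall>t\<in>{k..T}. D t \<in> Dset T Dh Dl t) \<and> (\<forall>t\<in>{k..<T}. D t \<le> D (Suc t))"
  using assms
proof (induction q arbitrary: k u)
  case Nil
  then show ?case by simp
next
  case (Cons a r)
  have a: "a = Lay k u" using Cons.prems(4) by simp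
  then obtain b r' where r: "r = b # r'"
    using Cons.prems(2,3) by (cases r) auto
  have ab: "(a, b) \<in> garcs T Dh Dl" and arcs_r: "set (path_arcs r) \<subseteq> garcs T Dh Dl"
    using Cons.prems(1) r by (auto simp: path_arcs_Cons_Cons)
  have u: "u \<in> Dset T Dh Dl k" using ab a by (auto simp: garcs_def)
  consider (last) "k = T" "b = Snk"
    | (step) w where "k < T" "b = Lay (Suc k) w" "w \<in> Dset T Dh Dl (Suc k)" "u \<le> w"
    using ab a Cons.prems(5) unfolding garcs_def by auto
  then show ?case
  proof cases
    case last
    have "r' = []"
    proof (rule ccontr)
      assume "r' \<noteq> []"
      then obtain c r'' where "r' = c # r''" by (cases r') auto
      then have "(Snk, c) \<in> garcs T Dh Dl"
        using arcs_r r last by (auto simp: path_arcs_Cons_Cons)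
      then show False by (auto simp: garcs_def)
    qed
    then show ?thesis
      using last a r u Cons.prems(5)
      by (intro exI[of _ "\<lambda>_. u"]) (simp add: scen_node_def numeral_2_eq_2)
  next
    case step
    obtain D where D: "r = map (scen_node T D) [Suc k..<T+2]" "D (Suc k) = w"
      "\<forall>t\<in>{Suc k..T}. D t \<in> Dset T Dh Dl t" "\<forall>t\<in>{Suc k..<T}. D t \<le> D (Suc t)"
      using Cons.IH[OF arcs_r] r step Cons.prems(3) by auto
    have "map (scen_node T (D(k := u))) [Suc k..<T+2] = r"
      unfolding D(1) by (rule map_cong) (auto simp: scen_node_def)
    moreover have "scen_node T (D(k := u)) k = a"
      using a step Cons.prems(5) by (simp add: scen_node_def)
    ultimately have "a # r = map (scen_node T (D(k := u))) [k..<T+2]"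
      using step by (simp add: upt_conv_Cons del: upt_Suc)
    moreover have "\<forall>t\<in>{k..T}. (D(k := u)) t \<in> Dset T Dh Dl t"
      using D(3) u by (auto simp: le_less Suc_le_eq)
    moreover have "\<forall>t\<in>{k..<T}. (D(k := u)) t \<le> (D(k := u)) (Suc t)"
      using D(2,4) step by (auto simp: le_less Suc_le_eq)
    ultimately show ?thesis
      by (intro exI[of _ "D(k := u)"]) (simp add: fun_upd_same del: fun_upd_apply upt_Suc)
  qed
qed

lemma st_path_is_scen_path:
  assumes "st_path T Dh Dl p"
  obtains D where "p = scen_path T D"
    "\<forall>t\<in>{1..T}. D t \<in> Dset T Dh Dl t" "\<forall>t\<in>{1..<T}. D t \<le> D (Suc t)"
proof -
  have p: "p \<noteq> []" "hd p = Src" "last p = Snk" "set (path_arcs p) \<subseteq> garcs T Dh Dl"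
    using assms unfolding st_path_def by auto
  then obtain b q where q: "p = Src # b # q"
    by (cases p rule: remdups_adj.cases) auto
  have "(Src, b) \<in> garcs T Dh Dl" and arcs_q: "set (path_arcs (b # q)) \<subseteq> garcs T Dh Dl"
    using p(4) q by (auto simp: path_arcs_Cons_Cons)
  then obtain v where "b = Lay 1 v" by (auto simp: garcs_def)
  then obtain D where D: "b # q = map (scen_node T D) [1..<T+2]"
    "\<forall>t\<in>{1..T}. D t \<in> Dset T Dh Dl t" "\<forall>t\<in>{1..<T}. D t \<le> D (Suc t)"
    using garcs_suffix_is_scen_path[OF arcs_q] p(3) q by auto
  have "p = scen_path T D"
    using q D(1) by (simp add: scen_path_def upt_conv_Cons scen_node_def del: upt_Suc)
  then show thesis using that D(2,3) by blast
qed

lemma rlp_feasible_iff_scenario: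
  assumes "1 \<le> T"
  shows "rlp_feasible T Dh Dl \<Gamma> p \<longleftrightarrow>
    (\<exists>D\<in>Ud T Dh Dl \<Gamma>. (\<forall>t\<in>{1..T}. D t \<in> breakpoints T Dh Dl) \<and> p = scen_path T D)"
proof
  assume "rlp_feasible T Dh Dl \<Gamma> p"
  then have p: "st_path T Dh Dl p" "sum_list (map (arc_wt Dh) (path_arcs p)) \<le> \<Gamma>"
    by (simp_all add: rlp_feasible_def)
  obtain D where D: "p = scen_path T D"
    "\<forall>t\<in>{1..T}. D t \<in> Dset T Dh Dl t" "\<forall>t\<in>{1..<T}. D t \<le> D (Suc t)"
    using st_path_is_scen_path[OF p(1)] .
  have "D \<in> Ud T Dh Dl \<Gamma>"
    using D p(2) by (auto simp: Ud_def Dset_eq_breakpoints path_weight_scen_path)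
  moreover have "\<forall>t\<in>{1..T}. D t \<in> breakpoints T Dh Dl"
    using D(2) by (simp add: Dset_eq_breakpoints)
  ultimately show "\<exists>D\<in>Ud T Dh Dl \<Gamma>. (\<forall>t\<in>{1..T}. D t \<in> breakpoints T Dh Dl) \<and> p = scen_path T D"
    using D(1) by blast
next
  assume "\<exists>D\<in>Ud T Dh Dl \<Gamma>. (\<forall>t\<in>{1..T}. D t \<in> breakpoints T Dh Dl) \<and> p = scen_path T D"
  then obtain D where D: "D \<in> Ud T Dh Dl \<Gamma>" "\<forall>t\<in>{1..T}. D t \<in> breakpoints T Dh Dl"
    and p: "p = scen_path T D" by blast
  have "st_path T Dh Dl (scen_path T D)"
    using D by (intro st_path_scen_path[OF assms]) (auto simp: Ud_def Dset_eq_breakpoints)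
  then show "rlp_feasible T Dh Dl \<Gamma> p"
    using D(1) by (simp add: p rlp_feasible_def path_weight_scen_path Ud_def)
qed

lemma convex_on_pcost: "convex_on UNIV (pcost T cP cI cB bP x k)"
proof -
  let ?X = "cumX x k"
  have "fI T cP cI cB bP k ?X = (\<lambda>v. (if k = T then (cI + cP) * ?X else cI * ?X)
                                   + (if k = T then - cI - bP else - cI) * v)"
    by (auto simp: fI_def fun_eq_iff algebra_simps)
  moreover have "fB T cP cI cB bP k ?X = (\<lambda>v. (if k = T then (cP - bP - cB) * ?X else - cB * ?X)
                                          + cB * v)"
    by (auto simp: fB_def fun_eq_iff algebra_simps)
  ultimately show ?thesis
    unfolding pcost_def by (intro convex_on_max) (simp_all add: convex_on_affine_real)
qed

definition move_level :: "(nat \<Rightarrow> real) \<Rightarrow> real \<Rightarrow> real \<Rightarrow> nat \<Rightarrow> real" where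
  "move_level D v y t = (if D t = v then y else D t)"

lemma convex_on_scen_cost_move_level:
  "convex_on UNIV (\<lambda>y. scen_cost T cP cI cB bP x (move_level D v y))"
  unfolding scen_cost_def
proof (rule convex_on_sum_fun)
  fix t
  show "convex_on UNIV (\<lambda>y. pcost T cP cI cB bP x t (move_level D v y t))"
    by (cases "D t = v") (simp_all add: move_level_def convex_on_pcost convex_on_const)
qed simp_all

lemma card_move_level_off_less:
  assumes "finite A" "v \<in> D ` A - V" "y \<in> V \<or> y \<in> D ` A - {v}"
  shows "card (move_level D v y ` A - V) < card (D ` A - V)"
proof (rule psubset_card_mono)
  show "finite (D ` A - V)" using assms(1) by simp
  have "move_level D v y ` A - V \<subseteq> D ` A - V - {v}"
    using assms(3) by (auto simp: move_level_def)
  then show "move_level D v y ` A - V \<subset> D ` A - V"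
    using assms(2) by blast
qed

lemma move_level_in_Ud:
  assumes "D \<in> Ud T Dh Dl \<Gamma>"
    and "\<forall>t\<in>{1..T}. D t = v \<longrightarrow> Dh t \<noteq> v \<and> Dh t - Dl t \<le> y \<and> y \<le> Dh t + Dl t"
    and "\<forall>t\<in>{1..T}. D t < v \<longrightarrow> D t \<le> y"
    and "\<forall>t\<in>{1..T}. v < D t \<longrightarrow> y \<le> D t"
  shows "move_level D v y \<in> Ud T Dh Dl \<Gamma>"
proof -
  have D: "\<forall>t\<in>{1..<T}. D t \<le> D (t + 1)" "\<forall>t\<in>{1..T}. Dh t - Dl t \<le> D t \<and> D t \<le> Dh t + Dl t"
    "card {t\<in>{1..T}. D t \<noteq> Dh t} \<le> \<Gamma>"
    using assms(1) by (simp_all add: Ud_def)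
  have "move_level D v y t \<le> move_level D v y (t + 1)" if t: "t \<in> {1..<T}" for t
  proof -
    have "t \<in> {1..T}" "t + 1 \<in> {1..T}" and mono: "D t \<le> D (t + 1)" using t D(1) by auto
    then have "D t < v \<longrightarrow> D t \<le> y" "v < D (t + 1) \<longrightarrow> y \<le> D (t + 1)"
      using assms(3,4) by blast+
    then show ?thesis using mono by (simp add: move_level_def)
  qed
  moreover have "Dh t - Dl t \<le> move_level D v y t \<and> move_level D v y t \<le> Dh t + Dl t"
    if "t \<in> {1..T}" for t
    using that D(2) assms(2) by (auto simp: move_level_def)
  moreover have "card {t\<in>{1..T}. move_level D v y t \<noteq> Dh t} \<le> \<Gamma>"
  proof -
    have "{t\<in>{1..T}. move_level D v y t \<noteq> Dh t} \<subseteq> {t\<in>{1..T}. D t \<noteq> Dh t}"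
      using assms(2) by (auto simp: move_level_def)
    from card_mono[OF _ this] show ?thesis using D(3) by simp
  qed
  ultimately show ?thesis by (simp add: Ud_def)
qed

lemma move_level_interval:
  assumes D: "D \<in> Ud T Dh Dl \<Gamma>" and t0: "t0 \<in> {1..T}" "D t0 \<notin> breakpoints T Dh Dl"
  obtains lo hi where "lo < D t0" "D t0 < hi"
    "lo \<in> breakpoints T Dh Dl \<union> D ` {1..T}" "hi \<in> breakpoints T Dh Dl \<union> D ` {1..T}"
    "\<And>y. lo \<le> y \<Longrightarrow> y \<le> hi \<Longrightarrow> move_level D (D t0) y \<in> Ud T Dh Dl \<Gamma>"
proof -
  define v where "v = D t0"
  define B where "B = {t\<in>{1..T}. D t = v}"
  define L where "L = (\<lambda>t. Dh t - Dl t) ` B \<union> D ` {t\<in>{1..T}. D t < v}"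
  define H where "H = (\<lambda>t. Dh t + Dl t) ` B \<union> D ` {t\<in>{1..T}. v < D t}"
  have bounds: "Dh t - Dl t \<le> D t" "D t \<le> Dh t + Dl t" if "t \<in> {1..T}" for t
    using D that by (simp_all add: Ud_def)
  have in_breakpoints: "Dh t - Dl t \<in> breakpoints T Dh Dl" "Dh t \<in> breakpoints T Dh Dl"
    "Dh t + Dl t \<in> breakpoints T Dh Dl" if "t \<in> {1..T}" for t
    using that by (auto simp: breakpoints_def)
  have v: "v \<notin> breakpoints T Dh Dl" using t0(2) by (simp add: v_def)
  have "t0 \<in> B" using t0(1) by (simp add: B_def v_def)
  then have fin_ne: "finite L" "L \<noteq> {}" "finite H" "H \<noteq> {}"
    by (auto simp: L_def H_def B_def)
  have L: "l < v \<and> l \<in> breakpoints T Dh Dl \<union> D ` {1..T}" if "l \<in> L" for l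
    using that bounds in_breakpoints v unfolding L_def B_def
    by (smt (verit) Un_iff image_iff mem_Collect_eq)
  have H: "v < h \<and> h \<in> breakpoints T Dh Dl \<union> D ` {1..T}" if "h \<in> H" for h
    using that bounds in_breakpoints v unfolding H_def B_def
    by (smt (verit) Un_iff image_iff mem_Collect_eq)
  define lo where "lo = Max L"
  define hi where "hi = Min H"
  have "lo \<in> L" "hi \<in> H" using fin_ne by (simp_all add: lo_def hi_def)
  have move: "move_level D v y \<in> Ud T Dh Dl \<Gamma>" if y: "lo \<le> y" "y \<le> hi" for y
  proof (rule move_level_in_Ud[OF D]; intro ballI impI)
    have below: "l \<le> y" if "l \<in> L" for l using that fin_ne y by (simp add: lo_def)
    have above: "y \<le> h" if "h \<in> H" for h using that fin_ne y by (simp add: hi_def)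
    fix t assume t: "t \<in> {1..T}"
    show "D t < v \<Longrightarrow> D t \<le> y" using t by (intro below) (simp add: L_def)
    show "v < D t \<Longrightarrow> y \<le> D t" using t by (intro above) (simp add: H_def)
    assume "D t = v"
    then have "t \<in> B" using t by (simp add: B_def)
    then show "Dh t \<noteq> v \<and> Dh t - Dl t \<le> y \<and> y \<le> Dh t + Dl t"
      using t in_breakpoints v below above by (auto simp: L_def H_def)
  qed
  show thesis
    using L[OF \<open>lo \<in> L\<close>] H[OF \<open>hi \<in> H\<close>] move
    by (intro that[of lo hi]) (simp_all add: v_def)
qed

lemma breakpoint_scenario_dominates:
  assumes "D \<in> Ud T Dh Dl \<Gamma>"
  shows "\<exists>D'\<in>Ud T Dh Dl \<Gamma>. (\<forall>t\<in>{1..T}. D' t \<in> breakpoints T Dh Dl) \<and>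
           scen_cost T cP cI cB bP x D \<le> scen_cost T cP cI cB bP x D'"
  using assms
proof (induction "card (D ` {1..T} - breakpoints T Dh Dl)" arbitrary: D rule: less_induct)
  case less
  show ?case
  proof (cases "\<forall>t\<in>{1..T}. D t \<in> breakpoints T Dh Dl")
    case True
    then show ?thesis using less.prems by blast
  next
    case False
    then obtain t0 where t0: "t0 \<in> {1..T}" "D t0 \<notin> breakpoints T Dh Dl" by blast
    obtain lo hi where lo_hi: "lo < D t0" "D t0 < hi"
      "lo \<in> breakpoints T Dh Dl \<union> D ` {1..T}" "hi \<in> breakpoints T Dh Dl \<union> D ` {1..T}"
      and Ud: "\<And>y. lo \<le> y \<Longrightarrow> y \<le> hi \<Longrightarrow> move_level D (D t0) y \<in> Ud T Dh Dl \<Gamma>"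
      using move_level_interval[OF less.prems t0] by blast
    let ?f = "\<lambda>y. scen_cost T cP cI cB bP x (move_level D (D t0) y)"
    have "?f (D t0) \<le> max (?f lo) (?f hi)"
      by (rule convex_on_le_max[OF convex_on_subset[OF convex_on_scen_cost_move_level]])
        (use lo_hi(1,2) in auto)
    moreover have "move_level D (D t0) (D t0) = D" by (simp add: fun_eq_iff move_level_def)
    ultimately have "scen_cost T cP cI cB bP x D \<le> max (?f lo) (?f hi)" by simp
    then obtain y where y: "y \<in> {lo, hi}" "scen_cost T cP cI cB bP x D \<le> ?f y"
      by (metis insertCI max_def)
    have "card (move_level D (D t0) y ` {1..T} - breakpoints T Dh Dl)
          < card (D ` {1..T} - breakpoints T Dh Dl)"
      by (rule card_move_level_off_less) (use t0 lo_hi y in auto)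
    moreover have "move_level D (D t0) y \<in> Ud T Dh Dl \<Gamma>"
      using y(1) lo_hi(1,2) by (intro Ud) auto
    ultimately obtain D' where "D' \<in> Ud T Dh Dl \<Gamma>" "\<forall>t\<in>{1..T}. D' t \<in> breakpoints T Dh Dl"
      "?f y \<le> scen_cost T cP cI cB bP x D'"
      using less.hyps by blast
    then show ?thesis using y(2) by force
  qed
qed

theorem proposition1:
  fixes T m :: nat and A :: "nat \<Rightarrow> nat \<Rightarrow> real" and b :: "nat \<Rightarrow> real"
    and cP cI cB bP :: real and x Dh Dl :: "nat \<Rightarrow> real" and \<Gamma> :: nat and C :: real
  assumes "T \<ge> 1"
    and "x \<in> plans T m A b"
    and "\<forall>t\<in>{1..T}. 0 \<le> Dh t"
    and "\<forall>t\<in>{1..<T}. Dh t \<le> Dh (t + 1)"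
    and "\<forall>t\<in>{1..T}. 0 \<le> Dl t \<and> Dl t \<le> Dh t"
    and "\<Gamma> \<le> T"
  shows "(\<exists>D\<in>Ud T Dh Dl \<Gamma>. scen_cost T cP cI cB bP x D = C \<and>
            (\<forall>D'\<in>Ud T Dh Dl \<Gamma>. scen_cost T cP cI cB bP x D' \<le> C))
     \<longleftrightarrow>
         (\<exists>p. rlp_feasible T Dh Dl \<Gamma> p \<and> path_len T cP cI cB bP x p = C \<and>
            (\<forall>p'. rlp_feasible T Dh Dl \<Gamma> p' \<longrightarrow> path_len T cP cI cB bP x p' \<le> C))"
proof -
  let ?paths = "{p. rlp_feasible T Dh Dl \<Gamma> p}"
  note feasible = rlp_feasible_iff_scenario[OF \<open>T \<ge> 1\<close>]
  have "\<exists>D\<in>Ud T Dh Dl \<Gamma>. scen_cost T cP cI cB bP x D = path_len T cP cI cB bP x p"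
    if "p \<in> ?paths" for p
    using that feasible path_len_scen_path by fastforce
  moreover have "\<exists>p\<in>?paths. scen_cost T cP cI cB bP x D \<le> path_len T cP cI cB bP x p"
    if D: "D \<in> Ud T Dh Dl \<Gamma>" for D
  proof -
    obtain D' where D': "D' \<in> Ud T Dh Dl \<Gamma>" "\<forall>t\<in>{1..T}. D' t \<in> breakpoints T Dh Dl"
      "scen_cost T cP cI cB bP x D \<le> scen_cost T cP cI cB bP x D'"
      using breakpoint_scenario_dominates[OF D] by blast
    then have "scen_path T D' \<in> ?paths" using feasible by blast
    with D'(3) show ?thesis by (metis path_len_scen_path)
  qed
  ultimately show ?thesis
    by (subst attained_max_iff[where P = "Ud T Dh Dl \<Gamma>" and Q = ?paths]) auto
qed

end
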